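(* Let $G$ be a three-dimensional Lie group with Lie algebra $\mathfrak{g}$. Then $G$ admits a left-invariant contact form $\omega$ (with contact distribution $D=\ker\omega$) if and only if there exists a completely nonholonomic left-invariant rank two distribution $D$ on $G$ together with a left-invariant rank one distribution $D^{\perp}$ complementary to $D$ such that $[D^{\perp}(e),D(e)]\subset D(e)$; moreover, in this situation there exists a non-zero left-invariant $1$-form $\omega$ on $G$ with $\omega(D)=0$ (and it is a contact form).
   Context: A $1$-form $\omega$ on a $3$-manifold is contact if $\omega\wedge d\omega\neq 0$ everywhere. A distribution is completely nonholonomic if iterated Lie brackets of vector fields tangent to it span the whole tangent space at each point. Left-invariant distributions are identified with subspaces $D(e)\subset\mathfrak{g}$. *)

theory Defs
  imports "HOL-Analysis.Analysis"
begin

definition lie_bracket :: "('a::real_vector \<Rightarrow> 'a \<Rightarrow> 'a) \<Rightarrow> bool" where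
  "lie_bracket br \<longleftrightarrow> bilinear br \<and> (\<forall>x. br x x = 0) \<and>
     (\<forall>x y z. br x (br y z) + br y (br z x) + br z (br x y) = 0)"

text \<open>Iterated Lie brackets of elements of D (values at e of iterated brackets of
  left-invariant vector fields tangent to the left-invariant distribution D).\<close>
inductive_set iterated_brackets :: "('a \<Rightarrow> 'a \<Rightarrow> 'a) \<Rightarrow> 'a set \<Rightarrow> 'a set"
  for br :: "'a \<Rightarrow> 'a \<Rightarrow> 'a" and D :: "'a set" where
  base: "x \<in> D \<Longrightarrow> x \<in> iterated_brackets br D"
| brk: "x \<in> iterated_brackets br D \<Longrightarrow> y \<in> iterated_brackets br D \<Longrightarrow>
         br x y \<in> iterated_brackets br D"

definition completely_nonholonomic :: "('a::real_vector \<Rightarrow> 'a \<Rightarrow> 'a) \<Rightarrow> 'a set \<Rightarrow> bool" where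
  "completely_nonholonomic br D \<longleftrightarrow> span (iterated_brackets br D) = UNIV"

text \<open>Exterior derivative of a left-invariant 1-form omega (an element of g*):
  d omega (X,Y) = X(omega Y) - Y(omega X) - omega [X,Y] = - omega [X,Y].\<close>
definition d_form :: "('a \<Rightarrow> 'a \<Rightarrow> 'a) \<Rightarrow> ('a \<Rightarrow> real) \<Rightarrow> 'a \<Rightarrow> 'a \<Rightarrow> real" where
  "d_form br \<omega> X Y = - \<omega> (br X Y)"

definition wedge_d :: "('a \<Rightarrow> 'a \<Rightarrow> 'a) \<Rightarrow> ('a \<Rightarrow> real) \<Rightarrow> 'a \<Rightarrow> 'a \<Rightarrow> 'a \<Rightarrow> real" where
  "wedge_d br \<omega> X Y Z =
     \<omega> X * d_form br \<omega> Y Z + \<omega> Y * d_form br \<omega> Z X + \<omega> Z * d_form br \<omega> X Y"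

text \<open>Left-invariant contact form: a linear functional on g with omega wedge d omega
  non-zero (at e, hence everywhere by left-invariance).\<close>
definition contact_form :: "('a::real_vector \<Rightarrow> 'a \<Rightarrow> 'a) \<Rightarrow> ('a \<Rightarrow> real) \<Rightarrow> bool" where
  "contact_form br \<omega> \<longleftrightarrow> linear \<omega> \<and> (\<exists>X Y Z. wedge_d br \<omega> X Y Z \<noteq> 0)"

definition admissible_pair :: "('a::euclidean_space \<Rightarrow> 'a \<Rightarrow> 'a) \<Rightarrow> 'a set \<Rightarrow> 'a set \<Rightarrow> bool" where
  "admissible_pair br D L \<longleftrightarrow>
     subspace D \<and> dim D = 2 \<and> completely_nonholonomic br D \<and>
     subspace L \<and> dim L = 1 \<and> D \<inter> L = {0} \<and> {x + y |x y. x \<in> D \<and> y \<in> L} = UNIV \<and>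
     (\<forall>x\<in>L. \<forall>y\<in>D. br x y \<in> D)"

end

theory Submission
  imports Defs
begin

text \<open>For a non-zero left-invariant 1-form \<open>\<omega>\<close> with kernel \<open>D\<close>, the form
  \<open>\<omega> \<and> d\<omega>\<close> vanishes identically exactly when \<open>\<omega>[D, D] = 0\<close>, i.e. when \<open>D\<close> is a
  subalgebra; and since \<open>D\<close> is a hyperplane, a single bracket \<open>[X, Y]\<close> of elements of \<open>D\<close>
  leaving \<open>D\<close> already makes \<open>D\<close> completely nonholonomic. So \<open>\<omega>\<close> is contact iff its
  kernel is completely nonholonomic. In dimension 3 such a kernel is spanned by \<open>X, Y\<close> with
  \<open>k = \<omega>[X, Y] \<noteq> 0\<close>; if \<open>\<omega> v = 1\<close>, the vector
  \<open>\<xi> = v - (\<omega>[v, Y] / k) X + (\<omega>[v, X] / k) Y\<close> satisfies \<open>\<omega>[\<xi>, X] = \<omega>[\<xi>, Y] = 0\<close>,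
  so its line is a complement \<open>D\<^sup>\<perp>\<close> of \<open>D\<close> with \<open>[D\<^sup>\<perp>, D] \<subseteq> D\<close>.\<close>

lemma lie_bracket_bilinear: "lie_bracket br \<Longrightarrow> bilinear br"
  by (simp add: lie_bracket_def)

lemma lie_bracket_self: "lie_bracket br \<Longrightarrow> br x x = 0"
  by (simp add: lie_bracket_def)

lemma lie_bracket_antisym:
  assumes "lie_bracket br"
  shows "br y x = - br x y"
proof -
  have b: "bilinear br" using assms by (rule lie_bracket_bilinear)
  have "br (x + y) (x + y) = br x x + br x y + (br y x + br y y)"
    by (simp add: bilinear_ladd[OF b] bilinear_radd[OF b])
  then have "br x y + br y x = 0"
    using lie_bracket_self[OF assms, of "x + y"] lie_bracket_self[OF assms, of x]
      lie_bracket_self[OF assms, of y] by simp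
  then show ?thesis by (metis add.commute eq_neg_iff_add_eq_0)
qed

lemma independent_if_lie_bracket_nonzero:
  assumes lb: "lie_bracket br" and XY: "br X Y \<noteq> 0"
  shows "independent {X, Y}"
proof (rule independent_insertI)
  have b: "bilinear br" using lb by (rule lie_bracket_bilinear)
  show "X \<notin> span {Y}"
  proof
    assume "X \<in> span {Y}"
    then obtain t where "X = t *\<^sub>R Y" by (auto simp: span_singleton)
    then show False using XY by (simp add: bilinear_lmul[OF b] lie_bracket_self[OF lb])
  qed
  show "independent {Y}" using XY bilinear_rzero[OF b] by auto
qed

lemma functional_lie_bracket_add_scaleR:
  assumes lb: "lie_bracket br" and l: "linear \<omega>"
  shows "\<omega> (br (p + a *\<^sub>R v) (q + b *\<^sub>R v)) =
     \<omega> (br p q) + b * \<omega> (br p v) - a * \<omega> (br q v)"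
proof -
  have bb: "bilinear br" using lb by (rule lie_bracket_bilinear)
  have "br (p + a *\<^sub>R v) (q + b *\<^sub>R v) = br p q + b *\<^sub>R br p v + a *\<^sub>R br v q"
    by (simp add: bilinear_ladd[OF bb] bilinear_radd[OF bb] bilinear_lmul[OF bb]
        bilinear_rmul[OF bb] lie_bracket_self[OF lb])
  then show ?thesis
    by (simp add: lie_bracket_antisym[OF lb, of q v] linear_add[OF l] linear_scale[OF l]
        linear_neg[OF l])
qed

lemma contact_form_iff_kernel_not_subalgebra:
  assumes lb: "lie_bracket br" and l: "linear \<omega>"
  shows "contact_form br \<omega> \<longleftrightarrow> (\<exists>X Y. \<omega> X = 0 \<and> \<omega> Y = 0 \<and> \<omega> (br X Y) \<noteq> 0)"
proof
  assume "contact_form br \<omega>"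
  then obtain P Q R where W: "wedge_d br \<omega> P Q R \<noteq> 0" by (auto simp: contact_form_def)
  then obtain u where u: "\<omega> u \<noteq> 0" unfolding wedge_d_def by fastforce
  define v where "v = (1 / \<omega> u) *\<^sub>R u"
  have v: "\<omega> v = 1" using u by (simp add: v_def linear_scale[OF l])
  show "\<exists>X Y. \<omega> X = 0 \<and> \<omega> Y = 0 \<and> \<omega> (br X Y) \<noteq> 0"
  proof (rule ccontr)
    assume "\<nexists>X Y. \<omega> X = 0 \<and> \<omega> Y = 0 \<and> \<omega> (br X Y) \<noteq> 0"
    then have sub: "\<omega> (br (x + a *\<^sub>R v) (y + b *\<^sub>R v)) = b * \<omega> (br x v) - a * \<omega> (br y v)"
      if "\<omega> x = 0" "\<omega> y = 0" for x y a b
      using that functional_lie_bracket_add_scaleR[OF lb l] by auto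
    define p q r where "p = P - \<omega> P *\<^sub>R v" and "q = Q - \<omega> Q *\<^sub>R v" and "r = R - \<omega> R *\<^sub>R v"
    have pqr: "\<omega> p = 0" "\<omega> q = 0" "\<omega> r = 0"
      using v by (simp_all add: p_def q_def r_def linear_diff[OF l] linear_scale[OF l])
    have QR: "\<omega> (br Q R) = \<omega> R * \<omega> (br q v) - \<omega> Q * \<omega> (br r v)"
      using sub[OF pqr(2,3), of "\<omega> Q" "\<omega> R"] by (simp add: q_def r_def)
    have RP: "\<omega> (br R P) = \<omega> P * \<omega> (br r v) - \<omega> R * \<omega> (br p v)"
      using sub[OF pqr(3,1), of "\<omega> R" "\<omega> P"] by (simp add: r_def p_def)
    have PQ: "\<omega> (br P Q) = \<omega> Q * \<omega> (br p v) - \<omega> P * \<omega> (br q v)"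
      using sub[OF pqr(1,2), of "\<omega> P" "\<omega> Q"] by (simp add: p_def q_def)
    have "wedge_d br \<omega> P Q R = 0"
      unfolding wedge_d_def d_form_def QR RP PQ by (simp add: algebra_simps)
    then show False using W by simp
  qed
next
  assume "\<exists>X Y. \<omega> X = 0 \<and> \<omega> Y = 0 \<and> \<omega> (br X Y) \<noteq> 0"
  then obtain X Y where XY: "\<omega> X = 0" "\<omega> Y = 0" "\<omega> (br X Y) \<noteq> 0" by blast
  then have "wedge_d br \<omega> (br X Y) X Y \<noteq> 0" by (simp add: wedge_d_def d_form_def)
  then show "contact_form br \<omega>" using l by (auto simp: contact_form_def)
qed

lemma iterated_brackets_subset:
  assumes "\<And>x y. x \<in> D \<Longrightarrow> y \<in> D \<Longrightarrow> br x y \<in> D"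
  shows "iterated_brackets br D \<subseteq> D"
proof
  fix x assume "x \<in> iterated_brackets br D"
  then show "x \<in> D" by induction (auto intro: assms)
qed

lemma completely_nonholonomic_kernel_iff:
  fixes \<omega> :: "'a::real_vector \<Rightarrow> real"
  assumes l: "linear \<omega>" and nz: "\<omega> \<noteq> (\<lambda>_. 0)"
  shows "completely_nonholonomic br {x. \<omega> x = 0} \<longleftrightarrow>
    (\<exists>X Y. \<omega> X = 0 \<and> \<omega> Y = 0 \<and> \<omega> (br X Y) \<noteq> 0)"
proof
  assume cn: "completely_nonholonomic br {x. \<omega> x = 0}"
  show "\<exists>X Y. \<omega> X = 0 \<and> \<omega> Y = 0 \<and> \<omega> (br X Y) \<noteq> 0"
  proof (rule ccontr)
    assume "\<nexists>X Y. \<omega> X = 0 \<and> \<omega> Y = 0 \<and> \<omega> (br X Y) \<noteq> 0"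
    then have "iterated_brackets br {x. \<omega> x = 0} \<subseteq> {x. \<omega> x = 0}"
      by (intro iterated_brackets_subset) auto
    then have "span (iterated_brackets br {x. \<omega> x = 0}) \<subseteq> {x. \<omega> x = 0}"
      by (rule span_minimal) (rule linear_subspace_kernel[OF l])
    then show False using cn nz by (auto simp: completely_nonholonomic_def fun_eq_iff)
  qed
next
  assume "\<exists>X Y. \<omega> X = 0 \<and> \<omega> Y = 0 \<and> \<omega> (br X Y) \<noteq> 0"
  then obtain X Y where XY: "\<omega> X = 0" "\<omega> Y = 0" and k: "\<omega> (br X Y) \<noteq> 0" by blast
  let ?I = "iterated_brackets br {x. \<omega> x = 0}"
  have ker: "{x. \<omega> x = 0} \<subseteq> span ?I"
    by (auto intro: span_base iterated_brackets.base)
  have XYI: "br X Y \<in> span ?I"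
    using XY by (auto intro: span_base iterated_brackets.intros)
  have "z \<in> span ?I" for z
  proof -
    define c where "c = \<omega> z / \<omega> (br X Y)"
    have "\<omega> (z - c *\<^sub>R br X Y) = 0"
      using k by (simp add: c_def linear_diff[OF l] linear_scale[OF l])
    then have "(z - c *\<^sub>R br X Y) + c *\<^sub>R br X Y \<in> span ?I"
      using ker XYI by (blast intro: span_add span_scale)
    then show ?thesis by simp
  qed
  then show "completely_nonholonomic br {x. \<omega> x = 0}"
    by (auto simp: completely_nonholonomic_def)
qed

lemma linear_functional_eq_inner:
  fixes \<omega> :: "'a::euclidean_space \<Rightarrow> real"
  assumes "linear \<omega>"
  shows "\<omega> x = adjoint \<omega> 1 \<bullet> x"
  using adjoint_works[OF assms, of x 1] by (simp add: inner_commute)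

lemma dim_kernel_linear_functional:
  fixes \<omega> :: "'a::euclidean_space \<Rightarrow> real"
  assumes l: "linear \<omega>" and nz: "\<omega> \<noteq> (\<lambda>_. 0)"
  shows "dim {x. \<omega> x = 0} = DIM('a) - 1"
proof -
  have "adjoint \<omega> 1 \<noteq> 0"
    using nz linear_functional_eq_inner[OF l] by auto
  moreover have "{x. \<omega> x = 0} = {x. adjoint \<omega> 1 \<bullet> x = 0}"
    using linear_functional_eq_inner[OF l] by simp
  ultimately show ?thesis by (simp add: dim_hyperplane)
qed

lemma hyperplane_eq_kernel:
  fixes D :: "'a::euclidean_space set"
  assumes "subspace D" and "dim D = DIM('a) - 1"
  obtains \<omega> :: "'a \<Rightarrow> real" where "linear \<omega>" "\<omega> \<noteq> (\<lambda>_. 0)" "D = {x. \<omega> x = 0}"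
proof -
  obtain a where a: "a \<noteq> 0" "span D = {x. a \<bullet> x = 0}"
    using assms(2) lowdim_eq_hyperplane by blast
  have "linear (\<lambda>x. a \<bullet> x)" by (rule linearI) (simp_all add: inner_add_right)
  moreover have "(\<lambda>x. a \<bullet> x) \<noteq> (\<lambda>_. 0)"
    using a(1) by (metis inner_eq_zero_iff)
  moreover have "D = {x. a \<bullet> x = 0}"
    using a(2) assms(1) span_eq_iff[of D] by simp
  ultimately show ?thesis by (rule that)
qed

corollary contact_form_iff_completely_nonholonomic_kernel:
  fixes \<omega> :: "'a::real_vector \<Rightarrow> real"
  assumes lb: "lie_bracket br" and l: "linear \<omega>"
  shows "contact_form br \<omega> \<longleftrightarrow>
    \<omega> \<noteq> (\<lambda>_. 0) \<and> completely_nonholonomic br {x. \<omega> x = 0}"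
  using contact_form_iff_kernel_not_subalgebra[OF lb l]
    completely_nonholonomic_kernel_iff[OF l] by fastforce

lemma exists_transversal_annihilating_pair:
  fixes \<omega> :: "'a::real_vector \<Rightarrow> real"
  assumes lb: "lie_bracket br" and l: "linear \<omega>"
    and X: "\<omega> X = 0" and Y: "\<omega> Y = 0" and k: "\<omega> (br X Y) \<noteq> 0"
  shows "\<exists>\<xi>. \<omega> \<xi> = 1 \<and> \<omega> (br \<xi> X) = 0 \<and> \<omega> (br \<xi> Y) = 0"
proof -
  have bb: "bilinear br" using lb by (rule lie_bracket_bilinear)
  define k where "k = \<omega> (br X Y)"
  define v where "v = (1 / k) *\<^sub>R br X Y"
  define \<xi> where "\<xi> = v - (\<omega> (br v Y) / k) *\<^sub>R X + (\<omega> (br v X) / k) *\<^sub>R Y"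
  have br\<xi>: "\<omega> (br \<xi> z) = \<omega> (br v z) - \<omega> (br v Y) / k * \<omega> (br X z) + \<omega> (br v X) / k * \<omega> (br Y z)"
    for z
    by (simp add: \<xi>_def bilinear_ladd[OF bb] bilinear_lsub[OF bb] bilinear_lmul[OF bb]
        linear_add[OF l] linear_diff[OF l] linear_scale[OF l])
  have YX: "\<omega> (br Y X) = - k"
    by (simp add: k_def lie_bracket_antisym[OF lb, of X Y] linear_neg[OF l])
  have "\<omega> \<xi> = 1"
    using k by (simp add: \<xi>_def v_def k_def X Y linear_add[OF l] linear_diff[OF l] linear_scale[OF l])
  moreover have "\<omega> (br \<xi> X) = 0" and "\<omega> (br \<xi> Y) = 0"
    using k by (simp_all add: br\<xi> YX k_def lie_bracket_self[OF lb] linear_0[OF l])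
  ultimately show ?thesis by blast
qed

lemma kernel_subset_span_pair:
  fixes \<omega> :: "'a::euclidean_space \<Rightarrow> real"
  assumes "DIM('a) = 3" and lb: "lie_bracket br" and l: "linear \<omega>"
    and X: "\<omega> X = 0" and Y: "\<omega> Y = 0" and k: "\<omega> (br X Y) \<noteq> 0"
  shows "{x. \<omega> x = 0} \<subseteq> span {X, Y}"
proof -
  have "br X Y \<noteq> 0" using k linear_0[OF l] by auto
  then have "independent {X, Y}" and "X \<noteq> Y"
    using independent_if_lie_bracket_nonzero[OF lb] lie_bracket_self[OF lb] by auto
  moreover have "dim {x. \<omega> x = 0} = 2"
    using dim_kernel_linear_functional[OF l] k assms(1) by force
  ultimately show ?thesis
    using card_eq_dim[of "{X, Y}" "{x. \<omega> x = 0}"] X Y by simp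
qed

lemma exists_transversal_normalizing_kernel:
  fixes \<omega> :: "'a::euclidean_space \<Rightarrow> real"
  assumes "DIM('a) = 3" and lb: "lie_bracket br" and cf: "contact_form br \<omega>"
  shows "\<exists>\<xi>. \<omega> \<xi> = 1 \<and> (\<forall>y. \<omega> y = 0 \<longrightarrow> \<omega> (br \<xi> y) = 0)"
proof -
  have l: "linear \<omega>" using cf by (simp add: contact_form_def)
  obtain X Y where XY: "\<omega> X = 0" "\<omega> Y = 0" "\<omega> (br X Y) \<noteq> 0"
    using cf contact_form_iff_kernel_not_subalgebra[OF lb l] by blast
  obtain \<xi> where \<xi>: "\<omega> \<xi> = 1" "\<omega> (br \<xi> X) = 0" "\<omega> (br \<xi> Y) = 0"
    using exists_transversal_annihilating_pair[OF lb l XY] by blast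
  have "linear (\<lambda>y. \<omega> (br \<xi> y))"
    using lie_bracket_bilinear[OF lb] l by (simp add: bilinear_def linear_compose[unfolded o_def])
  then have "span {X, Y} \<subseteq> {y. \<omega> (br \<xi> y) = 0}"
    using \<xi> by (intro span_minimal) (auto dest: linear_subspace_kernel)
  then show ?thesis
    using kernel_subset_span_pair[OF assms(1) lb l XY] \<xi>(1) by blast
qed

lemma admissible_pair_kernel:
  fixes \<omega> :: "'a::euclidean_space \<Rightarrow> real"
  assumes lb: "lie_bracket br" and l: "linear \<omega>"
    and cn: "completely_nonholonomic br {x. \<omega> x = 0}" and d: "dim {x. \<omega> x = 0} = 2"
    and \<xi>: "\<omega> \<xi> = 1" and normalizes: "\<And>y. \<omega> y = 0 \<Longrightarrow> \<omega> (br \<xi> y) = 0"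
  shows "admissible_pair br {x. \<omega> x = 0} (span {\<xi>})"
proof -
  have \<xi>0: "\<xi> \<noteq> 0" using \<xi> linear_0[OF l] by auto
  have line: "x \<in> span {\<xi>} \<longleftrightarrow> (\<exists>t. x = t *\<^sub>R \<xi>)" for x
    by (auto simp: span_singleton)
  have "{x. \<omega> x = 0} \<inter> span {\<xi>} = {0}"
    using \<xi> by (auto simp: line linear_scale[OF l] linear_0[OF l] span_zero)
  moreover have "z \<in> {x + y |x y. \<omega> x = 0 \<and> y \<in> span {\<xi>}}" for z
  proof -
    have "\<omega> (z - \<omega> z *\<^sub>R \<xi>) = 0"
      using \<xi> by (simp add: linear_diff[OF l] linear_scale[OF l])
    then show ?thesis using line by force
  qed
  moreover have "\<omega> (br x y) = 0" if "x \<in> span {\<xi>}" "\<omega> y = 0" for x y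
    using that normalizes lie_bracket_bilinear[OF lb]
    by (auto simp: line bilinear_lmul linear_scale[OF l])
  ultimately show ?thesis
    using cn d \<xi>0 linear_subspace_kernel[OF l]
    by (auto simp: admissible_pair_def)
qed

lemma admissible_pair_kernel_contact_form:
  fixes \<omega> :: "'a::euclidean_space \<Rightarrow> real"
  assumes "DIM('a) = 3" and lb: "lie_bracket br" and cf: "contact_form br \<omega>"
  shows "\<exists>L. admissible_pair br {x. \<omega> x = 0} L"
proof -
  have l: "linear \<omega>" using cf by (simp add: contact_form_def)
  then have nz: "\<omega> \<noteq> (\<lambda>_. 0)" and cn: "completely_nonholonomic br {x. \<omega> x = 0}"
    using cf contact_form_iff_completely_nonholonomic_kernel[OF lb] by blast+
  have "dim {x. \<omega> x = 0} = 2"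
    using dim_kernel_linear_functional[OF l nz] assms(1) by simp
  moreover obtain \<xi> where "\<omega> \<xi> = 1" "\<And>y. \<omega> y = 0 \<Longrightarrow> \<omega> (br \<xi> y) = 0"
    using exists_transversal_normalizing_kernel[OF assms] by blast
  ultimately have "admissible_pair br {x. \<omega> x = 0} (span {\<xi>})"
    by (rule admissible_pair_kernel[OF lb l cn])
  then show ?thesis by blast
qed

lemma admissible_pair_eq_kernel_contact_form:
  fixes D :: "'a::euclidean_space set"
  assumes "DIM('a) = 3" and lb: "lie_bracket br" and ad: "admissible_pair br D L"
  obtains \<omega> :: "'a \<Rightarrow> real"
  where "linear \<omega>" "\<omega> \<noteq> (\<lambda>_. 0)" "D = {x. \<omega> x = 0}" "contact_form br \<omega>"
proof -
  have cn: "completely_nonholonomic br D"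
    using ad by (simp add: admissible_pair_def)
  have "subspace D" and "dim D = DIM('a) - 1"
    using ad assms(1) by (simp_all add: admissible_pair_def)
  then obtain \<omega> :: "'a \<Rightarrow> real"
    where l: "linear \<omega>" and nz: "\<omega> \<noteq> (\<lambda>_. 0)" and D: "D = {x. \<omega> x = 0}"
    by (rule hyperplane_eq_kernel)
  moreover have "contact_form br \<omega>"
    using cn D nz contact_form_iff_completely_nonholonomic_kernel[OF lb l] by simp
  ultimately show ?thesis by (rule that)
qed

theorem proposition1:
  fixes br :: "'a::euclidean_space \<Rightarrow> 'a \<Rightarrow> 'a"
  assumes "DIM('a) = 3"
    and "lie_bracket br"
  shows "((\<exists>\<omega>. contact_form br \<omega>) \<longleftrightarrow> (\<exists>D L. admissible_pair br D L)) \<and>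
         (\<forall>D L. admissible_pair br D L \<longrightarrow>
            (\<exists>\<omega>. linear \<omega> \<and> \<omega> \<noteq> (\<lambda>_. 0) \<and> (\<forall>x\<in>D. \<omega> x = 0) \<and> contact_form br \<omega>))"
proof -
  have "\<exists>D L. admissible_pair br D L" if "contact_form br \<omega>" for \<omega>
    using admissible_pair_kernel_contact_form[OF assms that] by blast
  moreover have "\<exists>\<omega>. linear \<omega> \<and> \<omega> \<noteq> (\<lambda>_. 0) \<and> (\<forall>x\<in>D. \<omega> x = 0) \<and> contact_form br \<omega>"
    if "admissible_pair br D L" for D L
    using admissible_pair_eq_kernel_contact_form[OF assms that] by blast
  ultimately show ?thesis by blast
qed

end
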